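(* Let $\varphi:\mathbb{T}^1\times I_0\to\mathbb{T}^1\times I_0$, $\varphi(\theta,x)=(g(\theta),f(\theta,x))$, be a $C^3$ partially hyperbolic skew-product with $g$ a uniformly expanding smooth circle map. Let $\alpha>0$ and let $C_1=C_1(\alpha)>0$ be a constant such that for every $\alpha$-curve $\widehat X$ and every $n$, $\varphi^n(\widehat X)$ is a $C_1$-curve whenever it is a graph. Then there exists $C_2=C_2(\alpha)>0$ such that if $\widehat X=\{(\theta,X(\theta)):\theta\in J\}$ and $\varphi^k(\widehat X)=\{(\theta,X_k(\theta)):\theta\in J_k\}$ are graphs with $|X'|,|X_k'|\le C_1$, then for all $z,w\in\varphi^k(\widehat X)$, $$\operatorname{dist}_{\widehat X}(\varphi^{-k}(z),\varphi^{-k}(w))\le C_2\,|\partial_\theta g^k(\theta_k)|^{-1}\operatorname{dist}_{\varphi^k(\widehat X)}(z,w)$$ for some $\theta_k\in J$.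
   Context: Partial hyperbolicity: there exist $C>0$, $0<\sigma<1$ with $\prod_{i=0}^{n-1}|\partial_x f(\varphi^i(\theta,x))|\,/\,|\partial_\theta g^n(\theta)|\le C\sigma^n$ for all $(\theta,x)$ and $n$. For $t>0$, a $t$-curve is the graph of a $C^1$ map $X:J\to I_0$, $J\subset\mathbb{T}^1$ an interval, with $|X'|\le t$. $\operatorname{dist}_A$ denotes the distance along the curve $A$ (arc length with respect to the Euclidean metric), and $\varphi^{-k}(z)$ denotes the point of $\widehat X$ mapped by $\varphi^k$ to $z$. *)

theory Defs
  imports "HOL-Analysis.Analysis"
begin

text \<open>The circle T^1 is represented by its universal cover: points of
T^1 x I0 are lifted to R x I0. The base map g is given by a lift G : R -> R of
integer degree, and the fibre map f by a function on R^2 which is 1-periodic in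
theta.\<close>

fun Ck :: "nat \<Rightarrow> (real \<times> real \<Rightarrow> real) \<Rightarrow> bool" where
  "Ck 0 f = continuous_on UNIV f"
| "Ck (Suc k) f = (\<exists>f1 f2. (\<forall>z. (f has_derivative (\<lambda>h. fst h * f1 z + snd h * f2 z)) (at z))
                      \<and> Ck k f1 \<and> Ck k f2)"

definition smooth_real :: "(real \<Rightarrow> real) \<Rightarrow> bool" where
  "smooth_real G = (\<forall>n x. ((deriv ^^ n) G) differentiable (at x))"

definition expanding_circle_lift :: "(real \<Rightarrow> real) \<Rightarrow> bool" where
  "expanding_circle_lift G = (smooth_real G \<and> (\<exists>d::int. \<forall>t. G (t + 1) = G t + of_int d)
                              \<and> (\<exists>lam>1. \<forall>t. \<bar>deriv G t\<bar> \<ge> lam))"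

definition skew :: "(real \<Rightarrow> real) \<Rightarrow> (real \<times> real \<Rightarrow> real) \<Rightarrow> real \<times> real \<Rightarrow> real \<times> real" where
  "skew G f = (\<lambda>p. (G (fst p), f p))"

definition partially_hyperbolic ::
  "(real \<Rightarrow> real) \<Rightarrow> (real \<times> real \<Rightarrow> real) \<Rightarrow> real set \<Rightarrow> bool" where
  "partially_hyperbolic G f I0 =
    (\<exists>C>0. \<exists>\<sigma>. 0 < \<sigma> \<and> \<sigma> < 1 \<and>
      (\<forall>t x n. x \<in> I0 \<longrightarrow>
        (\<Prod>i<n. \<bar>deriv (\<lambda>y. f (fst ((skew G f ^^ i) (t, x)), y)) (snd ((skew G f ^^ i) (t, x)))\<bar>)
          / \<bar>deriv (G ^^ n) t\<bar> \<le> C * \<sigma> ^ n))"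

text \<open>A lifted interval J projects injectively into the circle.\<close>
definition circle_injective :: "real set \<Rightarrow> bool" where
  "circle_injective J = (\<forall>a\<in>J. \<forall>b\<in>J. a - b \<in> \<int> \<longrightarrow> a = b)"

definition tcurve :: "real set \<Rightarrow> real \<Rightarrow> real set \<Rightarrow> (real \<Rightarrow> real) \<Rightarrow> bool" where
  "tcurve I0 t J X =
    (is_interval J \<and> J \<noteq> {} \<and> circle_injective J \<and> (\<forall>s\<in>J. X s \<in> I0) \<and>
     (\<exists>X'. (\<forall>s\<in>J. (X has_real_derivative X' s) (at s within J)) \<and> continuous_on J X'
           \<and> (\<forall>s\<in>J. \<bar>X' s\<bar> \<le> t)))"

text \<open>phi^n of the graph of X over J is a graph over the circle.\<close>
definition image_is_graph :: "(real \<Rightarrow> real) \<Rightarrow> nat \<Rightarrow> real set \<Rightarrow> bool" where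
  "image_is_graph G n J = circle_injective ((G ^^ n) ` J)"

definition represents_image ::
  "(real \<Rightarrow> real) \<Rightarrow> (real \<times> real \<Rightarrow> real) \<Rightarrow> nat \<Rightarrow> real set \<Rightarrow> (real \<Rightarrow> real) \<Rightarrow> (real \<Rightarrow> real) \<Rightarrow> bool" where
  "represents_image G f n J X Y = (\<forall>s\<in>J. Y ((G ^^ n) s) = snd ((skew G f ^^ n) (s, X s)))"

definition graph_dist :: "(real \<Rightarrow> real) \<Rightarrow> real \<Rightarrow> real \<Rightarrow> real" where
  "graph_dist X a b = integral {min a b..max a b} (\<lambda>s. sqrt (1 + (deriv X s)\<^sup>2))"

end

theory Submission
  imports Defs
begin

text \<open>Along a C1-curve with slope bounded by t, arc length is comparable to the length of the
base interval: |a - b| \<le> dist \<le> sqrt (1 + t^2) |a - b|. Since the point theta_k may be chosen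
freely, the mean value theorem for G^k converts the base length of the image curve into
|(G^k)'(theta_k)| |a - b|, and |(G^k)'| \<ge> 1 makes the inverse power harmless. Only the slope
bounds and the expansion of G enter.\<close>

lemma is_interval_1_min_max_subset:
  fixes J :: "real set"
  assumes "is_interval J" and "a \<in> J" and "b \<in> J"
  shows "{min a b..max a b} \<subseteq> J"
proof
  fix x assume x: "x \<in> {min a b..max a b}"
  have "min a b \<in> J" "max a b \<in> J"
    using assms(2,3) by (simp_all add: min_def max_def)
  then show "x \<in> J"
    by (rule mem_is_interval_1_I[OF assms(1)]) (use x in simp_all)
qed

lemma has_integral_graph_dist:
  assumes J: "is_interval J" and a: "a \<in> J" and b: "b \<in> J"
    and X: "\<And>s. s \<in> J \<Longrightarrow> (X has_real_derivative X' s) (at s within J)"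
    and X'_cont: "continuous_on J X'"
  shows "((\<lambda>s. sqrt (1 + (X' s)\<^sup>2)) has_integral graph_dist X a b) {min a b..max a b}"
proof -
  let ?h = "\<lambda>s. sqrt (1 + (X' s)\<^sup>2)"
  have sub: "{min a b..max a b} \<subseteq> J"
    using J a b by (rule is_interval_1_min_max_subset)
  have "continuous_on {min a b..max a b} ?h"
    by (intro continuous_intros continuous_on_subset[OF X'_cont sub])
  then obtain I where I: "(?h has_integral I) {min a b..max a b}"
    using integrable_continuous_interval by blast
  have deriv_eq: "deriv X s = X' s" if "s \<in> {min a b<..<max a b}" for s
  proof -
    have open_sub: "{min a b<..<max a b} \<subseteq> J"
      using sub by auto
    with that have "s \<in> J" by blast
    then have "(X has_real_derivative X' s) (at s within {min a b<..<max a b})"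
      by (rule DERIV_subset[OF X open_sub])
    then have "(X has_real_derivative X' s) (at s)"
      by (simp only: at_within_open[OF that open_greaterThanLessThan])
    then show ?thesis
      by (rule DERIV_imp_deriv)
  qed
  have "((\<lambda>s. sqrt (1 + (deriv X s)\<^sup>2)) has_integral I) {min a b..max a b}"
  proof (rule has_integral_spike_finite[OF _ _ I])
    fix s assume "s \<in> {min a b..max a b} - {min a b, max a b}"
    then show "sqrt (1 + (deriv X s)\<^sup>2) = ?h s" by (simp add: deriv_eq)
  qed simp
  then have "graph_dist X a b = I"
    unfolding graph_dist_def by (rule integral_unique)
  with I show ?thesis by simp
qed

lemma tcurve_graph_dist_bounds:
  assumes "tcurve I0 t J X" and a: "a \<in> J" and b: "b \<in> J"
  shows "\<bar>a - b\<bar> \<le> graph_dist X a b" and "graph_dist X a b \<le> sqrt (1 + t\<^sup>2) * \<bar>a - b\<bar>"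
proof -
  obtain X' where J: "is_interval J"
    and X: "\<And>s. s \<in> J \<Longrightarrow> (X has_real_derivative X' s) (at s within J)"
    and X'_cont: "continuous_on J X'" and X'_bound: "\<And>s. s \<in> J \<Longrightarrow> \<bar>X' s\<bar> \<le> t"
    using assms(1) unfolding tcurve_def by blast
  note int = has_integral_graph_dist[OF J a b X X'_cont]
  have sub: "{min a b..max a b} \<subseteq> J"
    using J a b by (rule is_interval_1_min_max_subset)
  have const: "((\<lambda>s. c) has_integral c * \<bar>a - b\<bar>) {min a b..max a b}" for c
    using has_integral_const_real[of c "min a b" "max a b"]
    by (cases "a \<le> b") (simp_all add: mult.commute)
  show "\<bar>a - b\<bar> \<le> graph_dist X a b"
    using has_integral_le[OF const[of 1] int] by simp
  have "sqrt (1 + (X' s)\<^sup>2) \<le> sqrt (1 + t\<^sup>2)" if "s \<in> {min a b..max a b}" for s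
    using power_mono[OF X'_bound abs_ge_zero, of s 2] sub that by auto
  then show "graph_dist X a b \<le> sqrt (1 + t\<^sup>2) * \<bar>a - b\<bar>"
    by (intro has_integral_le[OF int const]) auto
qed

lemma funpow_has_real_derivative_expanding:
  assumes "\<And>x. (g has_real_derivative g' x) (at x)" and "\<And>x. 1 \<le> \<bar>g' x\<bar>"
  shows "\<exists>D. ((g ^^ k) has_real_derivative D) (at x) \<and> 1 \<le> \<bar>D\<bar>"
proof (induction k arbitrary: x)
  case 0
  show ?case by (auto intro!: exI[of _ 1] DERIV_ident simp: id_def)
next
  case (Suc k)
  obtain D where D: "((g ^^ k) has_real_derivative D) (at x)" "1 \<le> \<bar>D\<bar>"
    using Suc.IH by blast
  have "((g \<circ> (g ^^ k)) has_real_derivative g' ((g ^^ k) x) * D) (at x)"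
    by (rule DERIV_chain[OF assms(1) D(1)])
  moreover have "1 \<le> \<bar>g' ((g ^^ k) x) * D\<bar>"
    using mult_mono[OF assms(2) D(2)] by (simp add: abs_mult)
  ultimately show ?case by (auto simp: o_def)
qed

lemma expanding_circle_lift_funpow_deriv:
  assumes "expanding_circle_lift G"
  shows "((G ^^ k) has_real_derivative deriv (G ^^ k) x) (at x)"
    and "1 \<le> \<bar>deriv (G ^^ k) x\<bar>"
proof -
  obtain lam where lam: "lam > 1" "\<And>t. lam \<le> \<bar>deriv G t\<bar>" and "smooth_real G"
    using assms unfolding expanding_circle_lift_def by blast
  have "(G has_real_derivative deriv G y) (at y)" for y
  proof -
    have "((deriv ^^ 0) G) differentiable (at y)"
      using \<open>smooth_real G\<close> unfolding smooth_real_def by blast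
    then show ?thesis by (simp add: DERIV_deriv_iff_real_differentiable)
  qed
  moreover have "1 \<le> \<bar>deriv G y\<bar>" for y
    using lam(1) lam(2)[of y] by linarith
  ultimately obtain D where D: "((G ^^ k) has_real_derivative D) (at x)" "1 \<le> \<bar>D\<bar>"
    using funpow_has_real_derivative_expanding[of G "deriv G" k x] by blast
  then show "((G ^^ k) has_real_derivative deriv (G ^^ k) x) (at x)"
    and "1 \<le> \<bar>deriv (G ^^ k) x\<bar>"
    by (simp_all add: DERIV_imp_deriv)
qed

lemma mean_value_abs:
  fixes h :: "real \<Rightarrow> real"
  assumes "\<And>x. (h has_real_derivative deriv h x) (at x)"
  shows "\<exists>z. min a b \<le> z \<and> z \<le> max a b \<and> \<bar>h a - h b\<bar> = \<bar>a - b\<bar> * \<bar>deriv h z\<bar>"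
proof (cases "a = b")
  case True
  then show ?thesis by auto
next
  case False
  then have "min a b < max a b" by auto
  from MVT2[OF this assms] obtain z where z: "min a b < z" "z < max a b"
    and eq: "h (max a b) - h (min a b) = (max a b - min a b) * deriv h z"
    by blast
  have "\<bar>h a - h b\<bar> = \<bar>h (max a b) - h (min a b)\<bar>"
    by (cases "a \<le> b") (auto simp: min_def max_def)
  also have "\<dots> = \<bar>a - b\<bar> * \<bar>deriv h z\<bar>"
    using eq by (simp add: abs_mult abs_minus_commute[of a b] max_def min_def)
  finally show ?thesis using z less_imp_le by blast
qed

theorem proposition6p3:
  fixes G :: "real \<Rightarrow> real" and f :: "real \<times> real \<Rightarrow> real"
    and a0 b0 \<alpha> C1 :: real
  assumes I0: "a0 < b0"
    and G: "expanding_circle_lift G"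
    and f_C3: "Ck 3 f"
    and f_per: "\<forall>t x. f (t + 1, x) = f (t, x)"
    and f_maps: "\<forall>t x. x \<in> {a0..b0} \<longrightarrow> f (t, x) \<in> {a0..b0}"
    and PH: "partially_hyperbolic G f {a0..b0}"
    and alpha: "\<alpha> > 0"
    and C1_pos: "C1 > 0"
    and C1: "\<forall>n J X. tcurve {a0..b0} \<alpha> J X \<longrightarrow> image_is_graph G n J \<longrightarrow>
               (\<exists>Y. represents_image G f n J X Y \<and> tcurve {a0..b0} C1 ((G ^^ n) ` J) Y)"
  shows "\<exists>C2>0. \<forall>k J X Xk a b.
           tcurve {a0..b0} C1 J X \<longrightarrow> image_is_graph G k J \<longrightarrow>
           represents_image G f k J X Xk \<longrightarrow> tcurve {a0..b0} C1 ((G ^^ k) ` J) Xk \<longrightarrow>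
           a \<in> J \<longrightarrow> b \<in> J \<longrightarrow>
           (\<exists>\<theta>k\<in>J. graph_dist X a b
                     \<le> C2 * \<bar>deriv (G ^^ k) \<theta>k\<bar> powr (-1) * graph_dist Xk ((G ^^ k) a) ((G ^^ k) b))"
proof (intro exI[of _ "sqrt (1 + C1\<^sup>2)"] conjI allI impI)
  let ?C = "sqrt (1 + C1\<^sup>2)"
  show "?C > 0" by (simp add: add_pos_nonneg)
  fix k J X Xk a b
  assume X: "tcurve {a0..b0} C1 J X" and Xk: "tcurve {a0..b0} C1 ((G ^^ k) ` J) Xk"
    and a: "a \<in> J" and b: "b \<in> J"
  obtain z where z: "min a b \<le> z" "z \<le> max a b"
    and mvt: "\<bar>(G ^^ k) a - (G ^^ k) b\<bar> = \<bar>a - b\<bar> * \<bar>deriv (G ^^ k) z\<bar>"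
    using mean_value_abs[OF expanding_circle_lift_funpow_deriv(1)[OF G]] by blast
  have "is_interval J" using X by (simp add: tcurve_def)
  then have "z \<in> J"
    using is_interval_1_min_max_subset[OF _ a b] z by auto
  let ?D = "\<bar>deriv (G ^^ k) z\<bar>"
  have "0 < ?D"
    using expanding_circle_lift_funpow_deriv(2)[OF G, of k z] by linarith
  have "graph_dist X a b \<le> ?C * \<bar>a - b\<bar>"
    by (rule tcurve_graph_dist_bounds(2)[OF X a b])
  also have "\<dots> = ?C * ?D powr (-1) * \<bar>(G ^^ k) a - (G ^^ k) b\<bar>"
    using \<open>0 < ?D\<close> by (simp add: mvt powr_minus_divide)
  also have "\<dots> \<le> ?C * ?D powr (-1) * graph_dist Xk ((G ^^ k) a) ((G ^^ k) b)"
    by (intro mult_left_mono tcurve_graph_dist_bounds(1)[OF Xk]) (use a b in auto)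
  finally show "\<exists>\<theta>k\<in>J. graph_dist X a b
      \<le> ?C * \<bar>deriv (G ^^ k) \<theta>k\<bar> powr (-1) * graph_dist Xk ((G ^^ k) a) ((G ^^ k) b)"
    using \<open>z \<in> J\<close> by blast
qed

end
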